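(* For a point $(u,v)\in\mathbb{C}^2$, the following are equivalent: (1) $(u,v)\in\mathcal{D}_1$; (2) $|1+u^2-v^2|<1+|u|^2-|v|^2$ and $0<\mathrm{Im}(u(1+\overline{v}))$; (3) the roots of the equation $(u+i)z^2+2vz+(u-i)=0$ lie in $\mathbb{D}$; (4) $|\mathrm{Im}(v)+i\,\mathrm{Im}(\overline{u}v)|<\mathrm{Im}(u)$; (5) $|v|<|u+i|$ and $|\mathrm{Im}(v)+i\,\mathrm{Im}(\overline{u}v)|<\mathrm{Im}(u)$; (6) $\left|\frac{\alpha(u-i)+v}{u+i+\alpha v}\right|<1$ for every $\alpha\in\overline{\mathbb{D}}$; (7) $\left|\frac{u-i+\overline{\alpha}v}{u+i+\alpha v}\right|<1$ for every $\alpha\in\overline{\mathbb{D}}$; (8) $2|\mathrm{Im}(v)+i\,\mathrm{Im}(\overline{u}v)|+|1+u^2-v^2|<|i+u|^2-|v|^2$; (9) $\mathrm{Im}(u)>0$ and there is $\beta=\beta_1+i\beta_2\in\mathbb{D}$ ($\beta_1,\beta_2\in\mathbb{R}$) such that $v+\beta_1u+\beta_2=0$.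
   Context: $\mathbb{D}$ is the open unit disc and $\overline{\mathbb{D}}$ the closed unit disc in $\mathbb{C}$. $\mathcal{D}_1=\{(z_1,z_2)\in\mathbb{C}^2: 1+|z_1|^2-|z_2|^2>|1+z_1^2-z_2^2|,\ \mathrm{Im}(z_1(1+\overline{z_2}))>0\}$. *)

theory Defs
  imports "HOL-Analysis.Analysis"
begin

definition D1 :: "(complex \<times> complex) set" where
  "D1 = {(z1, z2). cmod (1 + z1^2 - z2^2) < 1 + (cmod z1)^2 - (cmod z2)^2
                   \<and> Im (z1 * (1 + cnj z2)) > 0}"

end

theory Submission
  imports Defs
begin

text \<open>
  All conditions are shown equivalent to (4), i.e. \<open>|w| < Im u\<close> for
  \<open>w = Im v + \<i> Im (cnj u v)\<close>.  Writing \<open>v = - (\<beta>\<^sub>1 u + \<beta>\<^sub>2)\<close> identifies \<open>w\<close> with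
  \<open>- Im u cnj \<beta>\<close>, which gives (9) and, by Cauchy--Schwarz, \<open>|v|\<^sup>2 < 1 + |u|\<^sup>2\<close>.  With the identity
  \<open>(1 + |u|\<^sup>2 - |v|\<^sup>2)\<^sup>2 - |1 + u\<^sup>2 - v\<^sup>2|\<^sup>2 = 4 ((Im u)\<^sup>2 - |w|\<^sup>2)\<close> this yields (1), (2), (5) and (8).
  For the quotients in (6) and (7), the difference of the squared moduli of numerator and
  denominator is affine in \<open>Re (\<alpha> w)\<close>, whose minimum over the closed disc is \<open>-|w|\<close>.
  Finally \<open>cnj (u + \<i>) (2 v) - cnj (2 v) (u - \<i>) = 4 w\<close> and \<open>|u + \<i>|\<^sup>2 - |u - \<i>|\<^sup>2 = 4 Im u\<close>, so
  (3) \<open>\<Longrightarrow>\<close> (4) is the necessary half of the Schur--Cohn criterion for the quadratic; conversely,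
  a root \<open>z\<close> with \<open>|z| \<ge> 1\<close> would give \<open>\<alpha> = 1/z\<close> in the closed disc with
  \<open>z (u + \<i> + \<alpha> v) = - (\<alpha> (u - \<i>) + v)\<close>, contradicting (6).
\<close>

lemma less_iff_power2_less:
  fixes x y :: real
  assumes "0 \<le> x"
  shows "x < y \<longleftrightarrow> 0 < y \<and> x^2 < y^2"
  using assms by (auto intro: power_strict_mono power2_less_imp_less)

lemma norm_less_norm_iff_power2: "cmod x < cmod y \<longleftrightarrow> (cmod x)^2 - (cmod y)^2 < 0"
  using less_iff_power2_less[of "cmod x" "cmod y"] by auto

lemma norm_divide_less_1_iff: "(d \<noteq> 0 \<and> cmod (n / d) < 1) \<longleftrightarrow> cmod n < cmod d"
  by (auto simp: norm_divide divide_less_eq)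

lemma norm_real_affine_sq_le:
  "(cmod (complex_of_real s * z + complex_of_real t))^2 \<le> (s^2 + t^2) * ((cmod z)^2 + 1)"
proof -
  have "(s^2 + t^2) * ((cmod z)^2 + 1) - (cmod (complex_of_real s * z + complex_of_real t))^2
          = (t * Re z - s)^2 + (t * Im z)^2"
    unfolding cmod_power2 by (simp add: power2_eq_square algebra_simps)
  moreover have "0 \<le> (t * Re z - s)^2 + (t * Im z)^2"
    by simp
  ultimately show ?thesis
    by linarith
qed

lemma ex_unit_Re_mult_eq_neg_norm: "\<exists>\<alpha>. cmod \<alpha> = 1 \<and> Re (\<alpha> * w) = - cmod w"
proof (cases "w = 0")
  case True
  then show ?thesis by (intro exI[of _ 1]) simp
next
  case False
  have "- cnj w / complex_of_real (cmod w) * w = - complex_of_real ((cmod w)^2) / complex_of_real (cmod w)"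
    unfolding complex_norm_square by (simp add: mult.commute)
  also have "\<dots> = - complex_of_real (cmod w)"
    using False by (simp add: power2_eq_square)
  finally show ?thesis
    using False
    by (intro exI[of _ "- cnj w / complex_of_real (cmod w)"]) (simp add: norm_divide)
qed

lemma all_cball_add_Re_mult_pos_iff:
  "(\<forall>\<alpha> \<in> cball 0 1. 0 < r + Re (\<alpha> * w)) \<longleftrightarrow> cmod w < r"
proof
  assume pos: "\<forall>\<alpha> \<in> cball 0 1. 0 < r + Re (\<alpha> * w)"
  obtain \<alpha> where \<alpha>: "cmod \<alpha> = 1" "Re (\<alpha> * w) = - cmod w"
    using ex_unit_Re_mult_eq_neg_norm by blast
  then have "\<alpha> \<in> cball 0 1" by simp
  with pos \<alpha> show "cmod w < r" by fastforce
next
  assume lt: "cmod w < r"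
  show "\<forall>\<alpha> \<in> cball 0 1. 0 < r + Re (\<alpha> * w)"
  proof
    fix \<alpha> :: complex assume "\<alpha> \<in> cball 0 1"
    then have "cmod (\<alpha> * w) \<le> cmod w"
      by (simp add: norm_mult mult_left_le_one_le)
    then show "0 < r + Re (\<alpha> * w)"
      using lt abs_Re_le_cmod[of "\<alpha> * w"] by linarith
  qed
qed

lemma quadratic_root_in_ball_if_moebius_bound:
  fixes a b c z :: complex
  assumes bound: "\<forall>\<alpha> \<in> cball 0 1. cmod (\<alpha> * c + b) < cmod (a + \<alpha> * b)"
    and root: "a * z^2 + 2 * b * z + c = 0"
  shows "cmod z < 1"
proof (rule ccontr)
  assume "\<not> cmod z < 1"
  then have z: "1 \<le> cmod z" "z \<noteq> 0" by auto
  define \<alpha> where "\<alpha> = inverse z"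
  have "\<alpha> \<in> cball 0 1"
    using z by (simp add: \<alpha>_def norm_inverse inverse_le_1_iff)
  with bound have lt: "cmod (\<alpha> * c + b) < cmod (a + \<alpha> * b)" by blast
  have "z * (z * (a + \<alpha> * b) + (\<alpha> * c + b)) = a * z^2 + 2 * b * z + c"
    using z by (simp add: \<alpha>_def field_simps power2_eq_square)
  then have "z * (a + \<alpha> * b) = - (\<alpha> * c + b)"
    using root z by (simp add: add_eq_0_iff2)
  then have "cmod z * cmod (a + \<alpha> * b) < 1 * cmod (a + \<alpha> * b)"
    using lt by (metis mult_1 norm_minus_cancel norm_mult)
  moreover have "1 * cmod (a + \<alpha> * b) \<le> cmod z * cmod (a + \<alpha> * b)"
    using z by (intro mult_right_mono) simp_all
  ultimately show False by linarith
qed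

lemma norm_combination_less_if_in_ball:
  fixes z1 z2 :: complex
  assumes "cmod z1 < 1" "cmod z2 < 1"
  shows "cmod (z1 * complex_of_real (1 - (cmod z2)^2) + z2 * complex_of_real (1 - (cmod z1)^2))
           < 1 - (cmod z1)^2 * (cmod z2)^2"
proof -
  define r s where "r = cmod z1" and "s = cmod z2"
  have r: "0 \<le> r" "r < 1" and s: "0 \<le> s" "s < 1"
    using assms by (simp_all add: r_def s_def)
  then have "r^2 \<le> 1" "s^2 \<le> 1"
    by (simp_all add: power_le_one)
  then have n: "cmod (complex_of_real (1 - r^2)) = 1 - r^2" "cmod (complex_of_real (1 - s^2)) = 1 - s^2"
    by (simp_all only: norm_of_real abs_of_nonneg diff_ge_0_iff_ge)
  have "cmod (z1 * complex_of_real (1 - s^2) + z2 * complex_of_real (1 - r^2))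
          \<le> cmod (z1 * complex_of_real (1 - s^2)) + cmod (z2 * complex_of_real (1 - r^2))"
    by (rule norm_triangle_ineq)
  also have "\<dots> = r * (1 - s^2) + s * (1 - r^2)"
    unfolding norm_mult n by (simp add: r_def s_def)
  also have "\<dots> = 1 - r^2 * s^2 - (1 - r) * (1 - s) * (1 - r * s)"
    by (simp add: power2_eq_square algebra_simps)
  also have "\<dots> < 1 - r^2 * s^2"
  proof -
    have "r * s < 1"
      using r s mult_left_le_one_le[of s r] by linarith
    then show ?thesis
      using r s by simp
  qed
  finally show ?thesis
    by (simp add: r_def s_def)
qed

lemma complex_quadratic_vieta:
  fixes a b c :: complex
  assumes "a \<noteq> 0"
  obtains z1 z2 where "b = - a * (z1 + z2)" and "c = a * (z1 * z2)"
proof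
  define s where "s = csqrt (b^2 - 4 * a * c)"
  show "b = - a * ((- b + s) / (2 * a) + (- b - s) / (2 * a))"
    using assms by (simp add: field_simps)
  have "a * ((- b + s) / (2 * a) * ((- b - s) / (2 * a))) = (b^2 - s^2) / (4 * a)"
    using assms by (simp add: field_simps power2_eq_square)
  also have "\<dots> = c"
    using assms by (simp add: s_def)
  finally show "c = a * ((- b + s) / (2 * a) * ((- b - s) / (2 * a)))" ..
qed

lemma schur_cohn_if_quadratic_roots_in_ball:
  fixes a b c :: complex
  assumes "a \<noteq> 0" and roots: "\<And>z. a * z^2 + b * z + c = 0 \<Longrightarrow> cmod z < 1"
  shows "cmod (cnj a * b - cnj b * c) < (cmod a)^2 - (cmod c)^2"
proof -
  obtain z1 z2 where b: "b = - a * (z1 + z2)" and c: "c = a * (z1 * z2)"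
    using complex_quadratic_vieta[OF \<open>a \<noteq> 0\<close>] by blast
  have "cmod z1 < 1" "cmod z2 < 1"
    by (rule roots, simp add: b c power2_eq_square algebra_simps)+
  then have lt: "cmod (z1 * complex_of_real (1 - (cmod z2)^2) + z2 * complex_of_real (1 - (cmod z1)^2))
                   < 1 - (cmod z1)^2 * (cmod z2)^2"
    by (rule norm_combination_less_if_in_ball)
  have "cnj a * b - cnj b * c = - complex_of_real ((cmod a)^2)
          * (z1 * complex_of_real (1 - (cmod z2)^2) + z2 * complex_of_real (1 - (cmod z1)^2))"
    unfolding b c of_real_diff complex_norm_square by (simp add: algebra_simps)
  then have "cmod (cnj a * b - cnj b * c) = (cmod a)^2
          * cmod (z1 * complex_of_real (1 - (cmod z2)^2) + z2 * complex_of_real (1 - (cmod z1)^2))"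
    by (simp only: norm_mult norm_minus_cancel norm_of_real abs_power2)
  also have "\<dots> < (cmod a)^2 * (1 - (cmod z1)^2 * (cmod z2)^2)"
    using lt \<open>a \<noteq> 0\<close> by simp
  also have "\<dots> = (cmod a)^2 - (cmod c)^2"
    by (simp add: c norm_mult power_mult_distrib algebra_simps)
  finally show ?thesis .
qed

definition schur_cohn_term :: "complex \<Rightarrow> complex \<Rightarrow> complex" where
  "schur_cohn_term u v = complex_of_real (Im v) + \<i> * complex_of_real (Im (cnj u * v))"

lemma norm_schur_cohn_term_sq:
  "(cmod (schur_cohn_term u v))^2 = (Im v)^2 + (Im (cnj u * v))^2"
  by (simp add: schur_cohn_term_def cmod_def)

lemma schur_cohn_term_quadratic:
  "cnj (u + \<i>) * (2 * v) - cnj (2 * v) * (u - \<i>) = 4 * schur_cohn_term u v"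
  by (rule complex_eqI) (simp_all add: schur_cohn_term_def algebra_simps)

lemma D1_norm_sq_diff:
  "(1 + (cmod u)^2 - (cmod v)^2)^2 - (cmod (1 + u^2 - v^2))^2
     = 4 * ((Im u)^2 - (cmod (schur_cohn_term u v))^2)"
  unfolding norm_schur_cohn_term_sq unfolding cmod_power2 by (simp add: power2_eq_square algebra_simps)

lemma norm_sq_diff_moebius:
  "(cmod (\<alpha> * (u - \<i>) + v))^2 - (cmod (u + \<i> + \<alpha> * v))^2
     = (cmod \<alpha>)^2 * (1 + (cmod u)^2 - (cmod v)^2 - 2 * Im u) - (1 + (cmod u)^2 - (cmod v)^2 + 2 * Im u)
       - 4 * Re (\<alpha> * schur_cohn_term u v)"
  unfolding cmod_power2 by (simp add: schur_cohn_term_def power2_eq_square algebra_simps)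

lemma norm_sq_diff_cnj_moebius:
  "(cmod (u - \<i> + cnj \<alpha> * v))^2 - (cmod (u + \<i> + \<alpha> * v))^2
     = - 4 * (Im u + Re (\<alpha> * schur_cohn_term u v))"
  unfolding cmod_power2 by (simp add: schur_cohn_term_def power2_eq_square algebra_simps)

lemma schur_cohn_term_affine_eq:
  assumes "v + complex_of_real (Re \<beta>) * u + complex_of_real (Im \<beta>) = 0"
  shows "schur_cohn_term u v = - complex_of_real (Im u) * cnj \<beta>"
proof -
  have v: "Re v = - Re \<beta> * Re u - Im \<beta>" "Im v = - Re \<beta> * Im u"
    using arg_cong[OF assms, of Re] arg_cong[OF assms, of Im] by (simp_all add: algebra_simps)
  show ?thesis by (simp add: schur_cohn_term_def complex_eq_iff v algebra_simps)
qed

lemma schur_cohn_iff_ex_ball: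
  "cmod (schur_cohn_term u v) < Im u \<longleftrightarrow>
     0 < Im u \<and> (\<exists>\<beta> \<in> ball 0 1. v + complex_of_real (Re \<beta>) * u + complex_of_real (Im \<beta>) = 0)"
proof (cases "0 < Im u")
  case False
  then show ?thesis
    using norm_ge_zero[of "schur_cohn_term u v"] by linarith
next
  case pos: True
  show ?thesis
  proof
    assume lt: "cmod (schur_cohn_term u v) < Im u"
    define \<beta> where "\<beta> = - cnj (schur_cohn_term u v) / complex_of_real (Im u)"
    have "cmod \<beta> < 1"
      using lt pos by (simp add: \<beta>_def norm_divide)
    moreover have "v + complex_of_real (Re \<beta>) * u + complex_of_real (Im \<beta>) = 0"
      using pos by (simp add: \<beta>_def schur_cohn_term_def complex_eq_iff field_simps)
    ultimately show "0 < Im u \<and>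
        (\<exists>\<beta> \<in> ball 0 1. v + complex_of_real (Re \<beta>) * u + complex_of_real (Im \<beta>) = 0)"
      using pos by auto
  next
    assume "0 < Im u \<and>
        (\<exists>\<beta> \<in> ball 0 1. v + complex_of_real (Re \<beta>) * u + complex_of_real (Im \<beta>) = 0)"
    then obtain \<beta> where "cmod \<beta> < 1" "v + complex_of_real (Re \<beta>) * u + complex_of_real (Im \<beta>) = 0"
      by auto
    then show "cmod (schur_cohn_term u v) < Im u"
      using pos by (simp add: schur_cohn_term_affine_eq norm_mult)
  qed
qed

lemma norm_sq_lt_if_schur_cohn:
  assumes "cmod (schur_cohn_term u v) < Im u"
  shows "(cmod v)^2 < 1 + (cmod u)^2"
proof -
  obtain \<beta> where \<beta>: "cmod \<beta> < 1"
    and v: "v = - (complex_of_real (Re \<beta>) * u + complex_of_real (Im \<beta>))"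
    using assms by (auto simp: schur_cohn_iff_ex_ball add_eq_0_iff2 add.assoc)
  have "(cmod v)^2 = (cmod (complex_of_real (Re \<beta>) * u + complex_of_real (Im \<beta>)))^2"
    by (simp only: v norm_minus_cancel)
  also have "\<dots> \<le> (cmod \<beta>)^2 * ((cmod u)^2 + 1)"
    unfolding cmod_power2[of \<beta>] by (rule norm_real_affine_sq_le)
  also have "\<dots> < 1 * ((cmod u)^2 + 1)"
    using \<beta> by (intro mult_strict_right_mono) (simp_all add: abs_square_less_1 add_nonneg_pos)
  finally show ?thesis by simp
qed

lemma D1_iff_schur_cohn: "(u, v) \<in> D1 \<longleftrightarrow> cmod (schur_cohn_term u v) < Im u"
proof -
  define S P W where "S = 1 + (cmod u)^2 - (cmod v)^2" and "P = cmod (1 + u^2 - v^2)"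
    and "W = cmod (schur_cohn_term u v)"
  have SP: "S^2 - P^2 = 4 * ((Im u)^2 - W^2)"
    unfolding S_def P_def W_def by (rule D1_norm_sq_diff)
  have P: "0 \<le> P" and W: "0 \<le> W"
    by (simp_all add: P_def W_def)
  have e: "\<bar>Im (cnj u * v)\<bar> \<le> W"
    using abs_Im_le_cmod[of "schur_cohn_term u v"] by (simp add: W_def schur_cohn_term_def)
  have "(u, v) \<in> D1 \<longleftrightarrow> P < S \<and> Im (cnj u * v) < Im u"
    by (simp add: D1_def S_def P_def algebra_simps)
  also have "\<dots> \<longleftrightarrow> W < Im u"
  proof
    assume "P < S \<and> Im (cnj u * v) < Im u"
    then have "W^2 < (Im u)^2" and "Im (cnj u * v) < Im u"
      using SP P less_iff_power2_less[of P S] by auto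
    then have "W < \<bar>Im u\<bar>" and "Im (cnj u * v) < Im u"
      using W abs_le_square_iff[of "Im u" W] by auto
    then show "W < Im u"
      using e by (cases "Im u < 0") auto
  next
    assume lt: "W < Im u"
    then have "0 < S"
      using norm_sq_lt_if_schur_cohn[of u v] by (simp add: S_def W_def)
    moreover have "W^2 < (Im u)^2"
      using lt W less_iff_power2_less[of W] by simp
    ultimately have "P < S"
      using SP P less_iff_power2_less[of P S] by simp
    then show "P < S \<and> Im (cnj u * v) < Im u"
      using lt e by simp
  qed
  finally show ?thesis
    unfolding W_def .
qed

lemma schur_cohn_iff_norm_sum_less:
  "cmod (schur_cohn_term u v) < Im u \<longleftrightarrow>
     2 * cmod (schur_cohn_term u v) + cmod (1 + u^2 - v^2) < (cmod (\<i> + u))^2 - (cmod v)^2"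
proof -
  define S P W b where "S = 1 + (cmod u)^2 - (cmod v)^2" and "P = cmod (1 + u^2 - v^2)"
    and "W = cmod (schur_cohn_term u v)" and "b = Im u"
  have SP: "S^2 - P^2 = 4 * (b^2 - W^2)"
    unfolding S_def P_def W_def b_def by (rule D1_norm_sq_diff)
  have eq: "(cmod (\<i> + u))^2 - (cmod v)^2 = S + 2 * b"
    unfolding S_def b_def cmod_power2 by (simp add: power2_eq_square algebra_simps)
  have "W < b \<longleftrightarrow> 2 * W + P < S + 2 * b"
  proof
    assume "W < b"
    moreover from this have "P < S"
      using D1_iff_schur_cohn[of u v] by (simp add: D1_def S_def P_def W_def b_def)
    ultimately show "2 * W + P < S + 2 * b" by linarith
  next
    assume lt: "2 * W + P < S + 2 * b"
    have P: "0 \<le> P" and W: "0 \<le> W"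
      by (simp_all add: P_def W_def)
    have "P^2 < (S + 2 * b - 2 * W)^2"
      using lt P by (intro power_strict_mono) auto
    also have "(S + 2 * b - 2 * W)^2 = P^2 + 4 * ((b - W) * (S + 2 * b))"
      using SP by (simp add: power2_eq_square algebra_simps)
    finally have "0 < (b - W) * (S + 2 * b)" by simp
    moreover have "0 < S + 2 * b"
      using lt P W by linarith
    ultimately show "W < b"
      by (simp add: zero_less_mult_iff)
  qed
  then show ?thesis
    unfolding eq by (simp only: W_def P_def b_def)
qed

lemma norm_less_norm_add_i_if_schur_cohn:
  assumes "cmod (schur_cohn_term u v) < Im u"
  shows "cmod v < cmod (u + \<i>)"
proof -
  have "(cmod (u + \<i>))^2 = (cmod u)^2 + 1 + 2 * Im u"
    unfolding cmod_power2 by (simp add: power2_eq_square algebra_simps)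
  moreover have "0 < Im u"
    using assms norm_ge_zero by (rule le_less_trans[rotated])
  ultimately have "(cmod v)^2 - (cmod (u + \<i>))^2 < 0"
    using norm_sq_lt_if_schur_cohn[OF assms] by linarith
  then show ?thesis
    by (simp add: norm_less_norm_iff_power2)
qed

lemma schur_cohn_iff_cnj_moebius:
  "cmod (schur_cohn_term u v) < Im u \<longleftrightarrow>
     (\<forall>\<alpha> \<in> cball 0 1. u + \<i> + \<alpha> * v \<noteq> 0 \<and>
        cmod ((u - \<i> + cnj \<alpha> * v) / (u + \<i> + \<alpha> * v)) < 1)"
proof -
  have neg: "- 4 * x < 0 \<longleftrightarrow> 0 < x" for x :: real
    by simp
  show ?thesis
    unfolding norm_divide_less_1_iff norm_less_norm_iff_power2 norm_sq_diff_cnj_moebius neg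
    by (rule all_cball_add_Re_mult_pos_iff[symmetric])
qed

lemma moebius_bound_if_schur_cohn:
  assumes lt: "cmod (schur_cohn_term u v) < Im u" and \<alpha>: "\<alpha> \<in> cball 0 1"
  shows "cmod (\<alpha> * (u - \<i>) + v) < cmod (u + \<i> + \<alpha> * v)"
proof -
  define S b r W where "S = 1 + (cmod u)^2 - (cmod v)^2" and "b = Im u" and "r = cmod \<alpha>"
    and "W = cmod (schur_cohn_term u v)"
  have "0 < S"
    using norm_sq_lt_if_schur_cohn[OF lt] by (simp add: S_def)
  moreover have "0 \<le> r" "r \<le> 1" "0 \<le> W" "W < b"
    using \<alpha> lt by (simp_all add: r_def W_def b_def)
  ultimately have "0 \<le> S * (1 - r^2)" "0 < (b - W) * (1 + r^2)" "0 \<le> W * (1 - r)^2"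
    by (simp_all add: power_le_one add_pos_nonneg)
  then have neg: "- S * (1 - r^2) - 2 * (b - W) * (1 + r^2) - 2 * W * (1 - r)^2 < 0"
    by linarith
  have "- Re (\<alpha> * schur_cohn_term u v) \<le> r * W"
    using abs_Re_le_cmod[of "\<alpha> * schur_cohn_term u v"] by (simp add: r_def W_def norm_mult)
  moreover have "- S * (1 - r^2) - 2 * (b - W) * (1 + r^2) - 2 * W * (1 - r)^2
                   = r^2 * (S - 2 * b) - (S + 2 * b) + 4 * (r * W)"
    by (simp add: power2_eq_square algebra_simps)
  moreover have "(cmod (\<alpha> * (u - \<i>) + v))^2 - (cmod (u + \<i> + \<alpha> * v))^2
                   = r^2 * (S - 2 * b) - (S + 2 * b) - 4 * Re (\<alpha> * schur_cohn_term u v)"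
    unfolding S_def b_def r_def by (rule norm_sq_diff_moebius)
  ultimately show ?thesis
    unfolding norm_less_norm_iff_power2 using neg by linarith
qed

lemma quadratic_roots_in_ball_if_moebius:
  assumes "\<forall>\<alpha> \<in> cball 0 1. u + \<i> + \<alpha> * v \<noteq> 0 \<and>
             cmod ((\<alpha> * (u - \<i>) + v) / (u + \<i> + \<alpha> * v)) < 1"
  shows "u + \<i> \<noteq> 0 \<and> (\<forall>z. (u + \<i>) * z^2 + 2 * v * z + (u - \<i>) = 0 \<longrightarrow> z \<in> ball 0 1)"
proof -
  have bound: "\<forall>\<alpha> \<in> cball 0 1. cmod (\<alpha> * (u - \<i>) + v) < cmod (u + \<i> + \<alpha> * v)"
    using assms norm_divide_less_1_iff by blast
  have "u + \<i> \<noteq> 0"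
    using assms by (metis add.right_neutral centre_in_cball mult_zero_left zero_le_one)
  moreover have "cmod z < 1" if "(u + \<i>) * z^2 + 2 * v * z + (u - \<i>) = 0" for z
    using quadratic_root_in_ball_if_moebius_bound[OF bound] that by blast
  ultimately show ?thesis by simp
qed

lemma schur_cohn_if_roots_in_ball:
  assumes "u + \<i> \<noteq> 0 \<and> (\<forall>z. (u + \<i>) * z^2 + 2 * v * z + (u - \<i>) = 0 \<longrightarrow> z \<in> ball 0 1)"
  shows "cmod (schur_cohn_term u v) < Im u"
proof -
  have "cmod (cnj (u + \<i>) * (2 * v) - cnj (2 * v) * (u - \<i>)) < (cmod (u + \<i>))^2 - (cmod (u - \<i>))^2"
    using assms by (intro schur_cohn_if_quadratic_roots_in_ball) auto
  moreover have "(cmod (u + \<i>))^2 - (cmod (u - \<i>))^2 = 4 * Im u"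
    unfolding cmod_power2 by (simp add: power2_eq_square algebra_simps)
  ultimately show ?thesis
    unfolding schur_cohn_term_quadratic by (simp add: norm_mult)
qed

theorem theorem4p4:
  fixes u v :: complex
  shows "((u, v) \<in> D1 \<longleftrightarrow>
            (cmod (1 + u^2 - v^2) < 1 + (cmod u)^2 - (cmod v)^2 \<and> 0 < Im (u * (1 + cnj v))))
       \<and> ((u, v) \<in> D1 \<longleftrightarrow>
            (u + \<i> \<noteq> 0 \<and> (\<forall>z. (u + \<i>) * z^2 + 2 * v * z + (u - \<i>) = 0 \<longrightarrow> z \<in> ball 0 1)))
       \<and> ((u, v) \<in> D1 \<longleftrightarrow>
            cmod (complex_of_real (Im v) + \<i> * complex_of_real (Im (cnj u * v))) < Im u)
       \<and> ((u, v) \<in> D1 \<longleftrightarrow>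
            (cmod v < cmod (u + \<i>) \<and>
             cmod (complex_of_real (Im v) + \<i> * complex_of_real (Im (cnj u * v))) < Im u))
       \<and> ((u, v) \<in> D1 \<longleftrightarrow>
            (\<forall>\<alpha> \<in> cball 0 1. u + \<i> + \<alpha> * v \<noteq> 0 \<and>
                cmod ((\<alpha> * (u - \<i>) + v) / (u + \<i> + \<alpha> * v)) < 1))
       \<and> ((u, v) \<in> D1 \<longleftrightarrow>
            (\<forall>\<alpha> \<in> cball 0 1. u + \<i> + \<alpha> * v \<noteq> 0 \<and>
                cmod ((u - \<i> + cnj \<alpha> * v) / (u + \<i> + \<alpha> * v)) < 1))
       \<and> ((u, v) \<in> D1 \<longleftrightarrow>
            2 * cmod (complex_of_real (Im v) + \<i> * complex_of_real (Im (cnj u * v)))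
              + cmod (1 + u^2 - v^2) < (cmod (\<i> + u))^2 - (cmod v)^2)
       \<and> ((u, v) \<in> D1 \<longleftrightarrow>
            (Im u > 0 \<and> (\<exists>\<beta> \<in> ball 0 1.
                v + complex_of_real (Re \<beta>) * u + complex_of_real (Im \<beta>) = 0)))"
proof -
  let ?moebius = "\<forall>\<alpha> \<in> cball 0 1. u + \<i> + \<alpha> * v \<noteq> 0 \<and>
                    cmod ((\<alpha> * (u - \<i>) + v) / (u + \<i> + \<alpha> * v)) < 1"
  let ?roots = "u + \<i> \<noteq> 0 \<and> (\<forall>z. (u + \<i>) * z^2 + 2 * v * z + (u - \<i>) = 0 \<longrightarrow> z \<in> ball 0 1)"
  have "cmod (schur_cohn_term u v) < Im u \<Longrightarrow> ?moebius"
    using moebius_bound_if_schur_cohn norm_divide_less_1_iff by blast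
  moreover have "?moebius \<Longrightarrow> ?roots"
    by (rule quadratic_roots_in_ball_if_moebius)
  moreover have "?roots \<Longrightarrow> cmod (schur_cohn_term u v) < Im u"
    by (rule schur_cohn_if_roots_in_ball)
  moreover have "(u, v) \<in> D1 \<longleftrightarrow>
      (cmod (1 + u^2 - v^2) < 1 + (cmod u)^2 - (cmod v)^2 \<and> 0 < Im (u * (1 + cnj v)))"
    unfolding D1_def by simp
  ultimately show ?thesis
    using D1_iff_schur_cohn[of u v] norm_less_norm_add_i_if_schur_cohn[of u v]
      schur_cohn_iff_cnj_moebius[of u v] schur_cohn_iff_norm_sum_less[of u v]
      schur_cohn_iff_ex_ball[of u v]
    unfolding schur_cohn_term_def by blast
qed

end
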